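(* Let $A$ be an $m\times n$ matrix with entries in $[-1,1]$, no zero column, and at most $L$ nonzero entries in each row, and let $H$ be the smallest absolute value of a nonzero entry of $A$. Then the expected shuffle size of DIMSUM with parameter $\gamma$ (the expected total number of emissions) is at most $\gamma\, n L/H^2$; in particular it is $O(nL\gamma/H^2)$, independent of $m$.
   Context: Let $A=(a_{ki})$ be an $m\times n$ real matrix with rows $r_1,\dots,r_m$ and columns $c_1,\dots,c_n$; $\|c_i\|$ is the Euclidean norm of column $i$ (assumed nonzero). DIMSUM with parameter $\gamma>0$ is the following randomized procedure. For each pair of distinct column indices $(i,j)$ set $p_{ij}=\min\!\left(1,\frac{\gamma}{\|c_i\|\|c_j\|}\right)$. For each row $k$ and each pair $(i,j)$ with $a_{ki}a_{kj}\neq 0$, independently (over all $k$ and all pairs) with probability $p_{ij}$ the value $a_{ki}a_{kj}$ is emitted to key $(i,j)$ (one "emission"). The shuffle size is the total number of emissions. *)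

theory Defs
  imports "HOL-Probability.Probability"
begin

text \<open>An m x n real matrix is represented as A :: nat => nat => real, with
  entry a_ki = A k i for k < m (rows) and i < n (columns).\<close>

definition col_norm :: "(nat \<Rightarrow> nat \<Rightarrow> real) \<Rightarrow> nat \<Rightarrow> nat \<Rightarrow> real" where
  "col_norm A m i = sqrt (\<Sum>k<m. (A k i)\<^sup>2)"

definition dimsum_prob :: "(nat \<Rightarrow> nat \<Rightarrow> real) \<Rightarrow> nat \<Rightarrow> real \<Rightarrow> nat \<Rightarrow> nat \<Rightarrow> real" where
  "dimsum_prob A m \<gamma> i j = min 1 (\<gamma> / (col_norm A m i * col_norm A m j))"

definition dimsum_slots :: "(nat \<Rightarrow> nat \<Rightarrow> real) \<Rightarrow> nat \<Rightarrow> nat \<Rightarrow> (nat \<times> nat \<times> nat) set" where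
  "dimsum_slots A m n = {(k, i, j). k < m \<and> i < n \<and> j < n \<and> i \<noteq> j \<and> A k i * A k j \<noteq> 0}"

text \<open>The random outcome of DIMSUM: for every slot independently, whether the value
  is emitted (with probability p_ij).\<close>
definition dimsum_outcome :: "(nat \<Rightarrow> nat \<Rightarrow> real) \<Rightarrow> nat \<Rightarrow> nat \<Rightarrow> real \<Rightarrow> (nat \<times> nat \<times> nat \<Rightarrow> bool) pmf" where
  "dimsum_outcome A m n \<gamma> =
     Pi_pmf (dimsum_slots A m n) False (\<lambda>(k, i, j). bernoulli_pmf (dimsum_prob A m \<gamma> i j))"

definition shuffle_size :: "(nat \<Rightarrow> nat \<Rightarrow> real) \<Rightarrow> nat \<Rightarrow> nat \<Rightarrow> (nat \<times> nat \<times> nat \<Rightarrow> bool) \<Rightarrow> nat" where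
  "shuffle_size A m n \<omega> = card {s \<in> dimsum_slots A m n. \<omega> s}"

definition expected_shuffle_size :: "(nat \<Rightarrow> nat \<Rightarrow> real) \<Rightarrow> nat \<Rightarrow> nat \<Rightarrow> real \<Rightarrow> real" where
  "expected_shuffle_size A m n \<gamma> =
     measure_pmf.expectation (dimsum_outcome A m n \<gamma>) (\<lambda>\<omega>. real (shuffle_size A m n \<omega>))"

end

theory Submission
  imports Defs
begin

text \<open>Each slot (k, i, j) is emitted with probability at most
  \<open>\<gamma> / (|c_i| |c_j|) \<le> \<gamma>/2 (1/|c_i|^2 + 1/|c_j|^2)\<close>, and the slots are
  symmetric in i and j, so the expected shuffle size is at most \<open>\<gamma> \<Sum>_(k,i,j) 1/|c_i|^2\<close>.
  For a fixed column i, each of the nz_i rows with a_ki nonzero contributes at most L slots,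
  while \<open>|c_i|^2 \<ge> nz_i H^2\<close>; so column i contributes at most \<open>L/H^2\<close>.\<close>

lemma expectation_card_Pi_bernoulli:
  fixes S :: "'a set" and q :: "'a \<Rightarrow> real"
  assumes fin: "finite S" and q: "\<And>s. s \<in> S \<Longrightarrow> 0 \<le> q s \<and> q s \<le> 1"
  shows "measure_pmf.expectation (Pi_pmf S False (\<lambda>s. bernoulli_pmf (q s)))
           (\<lambda>\<omega>. real (card {s \<in> S. \<omega> s})) = (\<Sum>s\<in>S. q s)"
proof -
  let ?P = "Pi_pmf S False (\<lambda>s. bernoulli_pmf (q s))"
  let ?ind = "\<lambda>s \<omega>. if \<omega> s then 1 else (0::real)"
  have card_eq: "real (card {s \<in> S. \<omega> s}) = (\<Sum>s\<in>S. ?ind s \<omega>)" for \<omega> :: "'a \<Rightarrow> bool"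
  proof -
    have "S \<inter> Collect \<omega> = {s \<in> S. \<omega> s}" by auto
    thus ?thesis using fin by (simp add: sum.If_cases)
  qed
  have integrable: "integrable (measure_pmf ?P) (?ind s)" for s
    by (rule measure_pmf.integrable_const_bound[where B=1]) auto
  have expectation_ind: "measure_pmf.expectation ?P (?ind s) = q s" if "s \<in> S" for s
  proof -
    have "measure_pmf.expectation ?P (?ind s)
        = measure_pmf.expectation (map_pmf (\<lambda>f. f s) ?P) (\<lambda>b. if b then 1 else (0::real))"
      by simp
    also have "map_pmf (\<lambda>f. f s) ?P = bernoulli_pmf (q s)"
      by (subst Pi_pmf_component[OF fin]) (simp add: that)
    finally show ?thesis using q[OF that] by simp
  qed
  have "measure_pmf.expectation ?P (\<lambda>\<omega>. real (card {s \<in> S. \<omega> s}))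
      = (\<Sum>s\<in>S. measure_pmf.expectation ?P (?ind s))"
    unfolding card_eq by (rule Bochner_Integration.integral_sum) (use integrable in auto)
  also have "\<dots> = (\<Sum>s\<in>S. q s)" by (rule sum.cong) (auto simp: expectation_ind)
  finally show ?thesis .
qed

lemma inverse_mult_le_mean_inverse_squares:
  fixes a b :: real
  shows "1 / (a * b) \<le> (1 / a\<^sup>2 + 1 / b\<^sup>2) / 2"
proof -
  have "0 \<le> (1/a - 1/b)\<^sup>2" by simp
  thus ?thesis by (simp add: power2_eq_square algebra_simps)
qed

lemma sum_triples_by_middle:
  fixes P :: "nat \<Rightarrow> nat \<Rightarrow> nat \<Rightarrow> bool" and g :: "nat \<Rightarrow> 'b :: comm_semiring_1"
  shows "(\<Sum>s\<in>{(k, i, j). k < m \<and> i < n \<and> j < n \<and> P k i j}. g (fst (snd s)))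
     = (\<Sum>i<n. g i * of_nat (\<Sum>k<m. card {j. j < n \<and> P k i j}))"
proof -
  let ?T = "{..<m} \<times> {..<n} \<times> {..<n}"
  have "(\<Sum>s\<in>{(k, i, j). k < m \<and> i < n \<and> j < n \<and> P k i j}. g (fst (snd s)))
      = (\<Sum>s\<in>?T. if case s of (k, i, j) \<Rightarrow> P k i j then g (fst (snd s)) else 0)"
    by (rule sum.mono_neutral_cong_left) (auto split: if_splits)
  also have "\<dots> = (\<Sum>k<m. \<Sum>i<n. \<Sum>j<n. if P k i j then g i else 0)"
    unfolding sum.cartesian_product by (simp add: case_prod_unfold)
  also have "\<dots> = (\<Sum>i<n. \<Sum>k<m. \<Sum>j<n. if P k i j then g i else 0)"
    by (rule sum.swap)
  also have "\<dots> = (\<Sum>i<n. \<Sum>k<m. g i * of_nat (card {j. j < n \<and> P k i j}))"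
  proof (intro sum.cong refl)
    fix i k
    have "{..<n} \<inter> Collect (P k i) = {j. j < n \<and> P k i j}" by auto
    thus "(\<Sum>j<n. if P k i j then g i else 0) = g i * of_nat (card {j. j < n \<and> P k i j})"
      by (simp add: sum.If_cases mult.commute)
  qed
  also have "\<dots> = (\<Sum>i<n. g i * of_nat (\<Sum>k<m. card {j. j < n \<and> P k i j}))"
    by (simp add: sum_distrib_left)
  finally show ?thesis .
qed

lemma finite_dimsum_slots: "finite (dimsum_slots A m n)"
  by (rule finite_subset[of _ "{..<m} \<times> {..<n} \<times> {..<n}"]) (auto simp: dimsum_slots_def)

lemma sum_dimsum_slots_swap:
  "(\<Sum>s\<in>dimsum_slots A m n. f (snd (snd s))) = (\<Sum>s\<in>dimsum_slots A m n. f (fst (snd s)))"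
  by (rule sum.reindex_bij_witness[where i = "\<lambda>(k, i, j). (k, j, i)" and j = "\<lambda>(k, i, j). (k, j, i)"])
     (auto simp: dimsum_slots_def mult.commute)

lemma col_norm_nonneg: "0 \<le> col_norm A m i"
  by (simp add: col_norm_def sum_nonneg)

lemma col_norm_squared: "(col_norm A m i)\<^sup>2 = (\<Sum>k<m. (A k i)\<^sup>2)"
  by (simp add: col_norm_def sum_nonneg)

lemma card_col_support_mult_le_col_norm_squared:
  assumes "0 \<le> H" and H_le: "\<And>k. k < m \<Longrightarrow> A k i \<noteq> 0 \<Longrightarrow> H \<le> \<bar>A k i\<bar>"
  shows "real (card {k. k < m \<and> A k i \<noteq> 0}) * H\<^sup>2 \<le> (col_norm A m i)\<^sup>2"
proof -
  have "real (card {k. k < m \<and> A k i \<noteq> 0}) * H\<^sup>2 = (\<Sum>k | k < m \<and> A k i \<noteq> 0. H\<^sup>2)"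
    by simp
  also have "\<dots> \<le> (\<Sum>k | k < m \<and> A k i \<noteq> 0. (A k i)\<^sup>2)"
  proof (rule sum_mono)
    fix k assume "k \<in> {k. k < m \<and> A k i \<noteq> 0}"
    then have "H \<le> \<bar>A k i\<bar>" using H_le by auto
    then show "H\<^sup>2 \<le> (A k i)\<^sup>2" using \<open>0 \<le> H\<close> power_mono[of H "\<bar>A k i\<bar>" 2] by simp
  qed
  also have "\<dots> \<le> (\<Sum>k<m. (A k i)\<^sup>2)" by (rule sum_mono2) auto
  finally show ?thesis by (simp add: col_norm_squared)
qed

lemma col_norm_pos:
  assumes "k < m" "A k i \<noteq> 0"
  shows "0 < col_norm A m i"
proof -
  have "0 < (A k i)\<^sup>2" using assms by simp
  also have "\<dots> \<le> (\<Sum>k<m. (A k i)\<^sup>2)" using assms by (intro member_le_sum) auto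
  finally show ?thesis by (simp add: col_norm_def)
qed

lemma sum_rows_card_coactive_le:
  fixes A :: "nat \<Rightarrow> nat \<Rightarrow> real"
  assumes row_sparse: "\<And>k. k < m \<Longrightarrow> card {j. j < n \<and> A k j \<noteq> 0} \<le> L"
  shows "(\<Sum>k<m. card {j. j < n \<and> i \<noteq> j \<and> A k i * A k j \<noteq> 0})
           \<le> L * card {k. k < m \<and> A k i \<noteq> 0}"
proof -
  have support: "{..<m} \<inter> {k. A k i \<noteq> 0} = {k. k < m \<and> A k i \<noteq> 0}" by auto
  have "(\<Sum>k<m. card {j. j < n \<and> i \<noteq> j \<and> A k i * A k j \<noteq> 0})
      \<le> (\<Sum>k<m. if A k i \<noteq> 0 then L else 0)"
  proof (rule sum_mono)
    fix k assume "k \<in> {..<m}"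
    have "card {j. j < n \<and> i \<noteq> j \<and> A k i * A k j \<noteq> 0} \<le> card {j. j < n \<and> A k j \<noteq> 0}"
      by (rule card_mono) auto
    also have "\<dots> \<le> L" using row_sparse \<open>k \<in> {..<m}\<close> by simp
    finally show "card {j. j < n \<and> i \<noteq> j \<and> A k i * A k j \<noteq> 0} \<le> (if A k i \<noteq> 0 then L else 0)"
      by (cases "A k i = 0") (simp, simp only: if_True not_False_eq_True)
  qed
  also have "\<dots> = L * card {k. k < m \<and> A k i \<noteq> 0}"
    using support by (simp add: sum.If_cases mult.commute)
  finally show ?thesis .
qed

lemma sum_dimsum_slots_inverse_col_norm_le:
  assumes row_sparse: "\<And>k. k < m \<Longrightarrow> card {j. j < n \<and> A k j \<noteq> 0} \<le> L"
    and no_zero_col: "\<And>i. i < n \<Longrightarrow> \<exists>k<m. A k i \<noteq> 0"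
    and "0 < H" and H_le: "\<And>k i. k < m \<Longrightarrow> i < n \<Longrightarrow> A k i \<noteq> 0 \<Longrightarrow> H \<le> \<bar>A k i\<bar>"
  shows "(\<Sum>s\<in>dimsum_slots A m n. 1 / (col_norm A m (fst (snd s)))\<^sup>2) \<le> real n * real L / H\<^sup>2"
proof -
  let ?c = "\<lambda>i. (col_norm A m i)\<^sup>2"
  let ?nz = "\<lambda>i. card {k. k < m \<and> A k i \<noteq> 0}"
  have column_bound: "1 / ?c i * real (L * ?nz i) \<le> real L / H\<^sup>2" if "i < n" for i
  proof -
    obtain k where "k < m" "A k i \<noteq> 0" using no_zero_col[OF \<open>i < n\<close>] by blast
    then have "0 < ?c i" using col_norm_pos[of k m A i] by simp
    moreover have "real (?nz i) * H\<^sup>2 \<le> ?c i"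
      using \<open>0 < H\<close> H_le \<open>i < n\<close> by (intro card_col_support_mult_le_col_norm_squared) auto
    ultimately show ?thesis using \<open>0 < H\<close> by (simp add: field_simps mult_left_mono)
  qed
  have "(\<Sum>s\<in>dimsum_slots A m n. 1 / ?c (fst (snd s)))
      = (\<Sum>i<n. 1 / ?c i * real (\<Sum>k<m. card {j. j < n \<and> i \<noteq> j \<and> A k i * A k j \<noteq> 0}))"
    unfolding dimsum_slots_def by (rule sum_triples_by_middle)
  also have "\<dots> \<le> (\<Sum>i<n. 1 / ?c i * real (L * ?nz i))"
  proof (rule sum_mono)
    fix i
    have "(\<Sum>k<m. card {j. j < n \<and> i \<noteq> j \<and> A k i * A k j \<noteq> 0}) \<le> L * ?nz i"
      using row_sparse by (rule sum_rows_card_coactive_le)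
    then have "real (\<Sum>k<m. card {j. j < n \<and> i \<noteq> j \<and> A k i * A k j \<noteq> 0}) \<le> real (L * ?nz i)"
      by (simp only: of_nat_le_iff)
    then show "1 / ?c i * real (\<Sum>k<m. card {j. j < n \<and> i \<noteq> j \<and> A k i * A k j \<noteq> 0})
        \<le> 1 / ?c i * real (L * ?nz i)"
      by (rule mult_left_mono) simp
  qed
  also have "\<dots> \<le> (\<Sum>i<n. real L / H\<^sup>2)" using column_bound by (intro sum_mono) auto
  finally show ?thesis by simp
qed

lemma expected_shuffle_size_eq_sum_dimsum_prob:
  assumes "0 \<le> \<gamma>"
  shows "expected_shuffle_size A m n \<gamma> = (\<Sum>(k, i, j)\<in>dimsum_slots A m n. dimsum_prob A m \<gamma> i j)"
proof -
  let ?q = "\<lambda>(k::nat, i, j). dimsum_prob A m \<gamma> i j"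
  have "0 \<le> ?q s \<and> ?q s \<le> 1" for s
    using assms col_norm_nonneg by (auto simp: dimsum_prob_def split: prod.split)
  moreover have "dimsum_outcome A m n \<gamma> = Pi_pmf (dimsum_slots A m n) False (\<lambda>s. bernoulli_pmf (?q s))"
    unfolding dimsum_outcome_def by (simp add: case_prod_unfold)
  ultimately show ?thesis
    unfolding expected_shuffle_size_def shuffle_size_def
    by (simp add: expectation_card_Pi_bernoulli finite_dimsum_slots)
qed

lemma dimsum_prob_le_mean_inverse_squares:
  assumes "0 \<le> \<gamma>"
  shows "dimsum_prob A m \<gamma> i j \<le> \<gamma> * ((1 / (col_norm A m i)\<^sup>2 + 1 / (col_norm A m j)\<^sup>2) / 2)"
proof -
  have "dimsum_prob A m \<gamma> i j \<le> \<gamma> * (1 / (col_norm A m i * col_norm A m j))"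
    by (simp add: dimsum_prob_def)
  also have "\<dots> \<le> \<gamma> * ((1 / (col_norm A m i)\<^sup>2 + 1 / (col_norm A m j)\<^sup>2) / 2)"
    using assms inverse_mult_le_mean_inverse_squares by (rule mult_left_mono[rotated])
  finally show ?thesis .
qed

lemma expected_shuffle_size_le_sum_inverse_col_norm:
  assumes "0 \<le> \<gamma>"
  shows "expected_shuffle_size A m n \<gamma>
           \<le> \<gamma> * (\<Sum>s\<in>dimsum_slots A m n. 1 / (col_norm A m (fst (snd s)))\<^sup>2)"
proof -
  let ?S = "dimsum_slots A m n" and ?f = "\<lambda>i. 1 / (col_norm A m i)\<^sup>2"
  have "expected_shuffle_size A m n \<gamma> \<le> (\<Sum>s\<in>?S. \<gamma> * ((?f (fst (snd s)) + ?f (snd (snd s))) / 2))"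
    unfolding expected_shuffle_size_eq_sum_dimsum_prob[OF assms]
    using dimsum_prob_le_mean_inverse_squares[OF assms] by (intro sum_mono) auto
  also have "\<dots> = (\<Sum>s\<in>?S. \<gamma> / 2 * (?f (fst (snd s)) + ?f (snd (snd s))))"
    by simp
  also have "\<dots> = \<gamma> / 2 * ((\<Sum>s\<in>?S. ?f (fst (snd s))) + (\<Sum>s\<in>?S. ?f (snd (snd s))))"
    by (simp only: sum.distrib[symmetric] sum_distrib_left)
  also have "\<dots> = \<gamma> * (\<Sum>s\<in>?S. ?f (fst (snd s)))"
    using sum_dimsum_slots_swap[of ?f A m n] by simp
  finally show ?thesis .
qed

lemma min_abs_nonzero_entry:
  fixes A :: "nat \<Rightarrow> nat \<Rightarrow> real"
  assumes "k0 < m" "i0 < n" "A k0 i0 \<noteq> 0"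
  defines "H \<equiv> Min {\<bar>A k i\<bar> | k i. k < m \<and> i < n \<and> A k i \<noteq> 0}"
  shows "0 < H" and "\<And>k i. k < m \<Longrightarrow> i < n \<Longrightarrow> A k i \<noteq> 0 \<Longrightarrow> H \<le> \<bar>A k i\<bar>"
proof -
  let ?E = "{\<bar>A k i\<bar> | k i. k < m \<and> i < n \<and> A k i \<noteq> 0}"
  have "?E \<subseteq> (\<lambda>(k, i). \<bar>A k i\<bar>) ` ({..<m} \<times> {..<n})" by auto
  then have "finite ?E"
    by (rule finite_subset) (auto intro!: finite_imageI)
  moreover have "?E \<noteq> {}" using assms by blast
  ultimately have "H \<in> ?E" unfolding H_def by (rule Min_in)
  then show "0 < H" by auto
  show "H \<le> \<bar>A k i\<bar>" if "k < m" "i < n" "A k i \<noteq> 0" for k i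
    unfolding H_def using \<open>finite ?E\<close> that by (intro Min_le) auto
qed

theorem theorem4:
  fixes A :: "nat \<Rightarrow> nat \<Rightarrow> real" and m n L :: nat and \<gamma> H :: real
  assumes entries: "\<And>k i. k < m \<Longrightarrow> i < n \<Longrightarrow> \<bar>A k i\<bar> \<le> 1"
    and no_zero_col: "\<And>i. i < n \<Longrightarrow> \<exists>k<m. A k i \<noteq> 0"
    and row_sparse: "\<And>k. k < m \<Longrightarrow> card {i. i < n \<and> A k i \<noteq> 0} \<le> L"
    and H_def: "H = Min {\<bar>A k i\<bar> | k i. k < m \<and> i < n \<and> A k i \<noteq> 0}"
    and gamma_pos: "\<gamma> > 0"
  shows "expected_shuffle_size A m n \<gamma> \<le> \<gamma> * real n * real L / H\<^sup>2"
proof (cases "n = 0")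
  case True
  then have "dimsum_slots A m n = {}" by (auto simp: dimsum_slots_def)
  then show ?thesis using True by (simp add: expected_shuffle_size_def shuffle_size_def)
next
  case False
  then obtain k0 where "k0 < m" "A k0 0 \<noteq> 0" using no_zero_col by blast
  with False have "0 < H" and H_le: "\<And>k i. k < m \<Longrightarrow> i < n \<Longrightarrow> A k i \<noteq> 0 \<Longrightarrow> H \<le> \<bar>A k i\<bar>"
    unfolding H_def by (intro min_abs_nonzero_entry[of k0 m 0 n A]; simp)+
  have "expected_shuffle_size A m n \<gamma>
      \<le> \<gamma> * (\<Sum>s\<in>dimsum_slots A m n. 1 / (col_norm A m (fst (snd s)))\<^sup>2)"
    using gamma_pos by (intro expected_shuffle_size_le_sum_inverse_col_norm) simp
  also have "\<dots> \<le> \<gamma> * (real n * real L / H\<^sup>2)"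
    using gamma_pos row_sparse no_zero_col \<open>0 < H\<close> H_le
    by (intro mult_left_mono sum_dimsum_slots_inverse_col_norm_le) auto
  finally show ?thesis by simp
qed

end
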